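(* Let $r,p,\Delta>0$ be fixed integers and suppose that sequences $\{\xi_{s,t}\}_{s,t\ge0}\subseteq\mathbb{N}$ and $\{k_i\}_{i\ge0}\subseteq\mathbb{N}$ satisfy $$k_{s+t+r}=k_s+k_t+p-\Delta\xi_{s,t}\quad\text{for all } s,t\ge0.$$ Then $\xi_{s,0}=\xi_{0,s}$ for all $s\ge0$, and for all $i\ge0$, $0\le j<r$: $$rk_{ir+j}=((i+1)r+j)k_0+(ir+j)p-\Delta\Big(\tau_j+r\sum_{s=0}^{i-1}\xi_{0,sr+j}\Big),$$ where $$\tau_j=j\xi_{0,0}+j\sum_{s=1}^{r-1}(\xi_{0,s+1}-\xi_{1,s})-r\sum_{s=1}^{j-1}(\xi_{0,s+1}-\xi_{1,s}),\quad 0\le j<r.$$ Moreover, for all $a,c\ge0$ and $0\le b,d<r$: if $b+d<r$, then $$\xi_{ar+b,cr+d}=\sum_{s=1}^{b-1}(\xi_{0,s+1}-\xi_{1,s})+\sum_{s=1}^{d-1}(\xi_{0,s+1}-\xi_{1,s})-\sum_{s=1}^{b+d-1}(\xi_{0,s+1}-\xi_{1,s})+\sum_{s=0}^{a+c}\xi_{0,sr+b+d}-\sum_{s=0}^{a-1}\xi_{0,sr+b}-\sum_{s=0}^{c-1}\xi_{0,sr+d};$$ and if $b+d\ge r$, then $$\xi_{ar+b,cr+d}=\sum_{s=1}^{b-1}(\xi_{0,s+1}-\xi_{1,s})+\sum_{s=1}^{d-1}(\xi_{0,s+1}-\xi_{1,s})-\sum_{s=1}^{b+d-r-1}(\xi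_{0,s+1}-\xi_{1,s})+\sum_{s=0}^{a+c+1}\xi_{0,sr+b+d-r}-\sum_{s=0}^{a-1}\xi_{0,sr+b}-\sum_{s=0}^{c-1}\xi_{0,sr+d}-\xi_{0,0}-\sum_{s=1}^{r-1}(\xi_{0,s+1}-\xi_{1,s}).$$
   Context: $\mathbb{N}$ includes $0$. A sum $\sum_{i=a}^b$ with $b<a$ is zero. *)

theory Defs
  imports Main
begin

definition xdiff :: "(nat \<Rightarrow> nat \<Rightarrow> nat) \<Rightarrow> nat \<Rightarrow> int" where
  "xdiff \<xi> s = int (\<xi> 0 (s+1)) - int (\<xi> 1 s)"

definition tau :: "(nat \<Rightarrow> nat \<Rightarrow> nat) \<Rightarrow> nat \<Rightarrow> nat \<Rightarrow> int" where
  "tau \<xi> r j = int j * int (\<xi> 0 0) + int j * (\<Sum>s\<in>{1..<r}. xdiff \<xi> s)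
     - int r * (\<Sum>s\<in>{1..<j}. xdiff \<xi> s)"

end

theory Submission
  imports Defs
begin

text \<open>Comparing the recurrence at \<open>(s, t)\<close> and \<open>(t, s)\<close> shows that \<open>\<xi>\<close> is symmetric;
  comparing it at \<open>(1, t)\<close> and \<open>(t + 1, 0)\<close> expresses the increments of \<open>k\<close> through
  \<open>xdiff\<close>, and comparing it at \<open>(i r + j, 0)\<close> shifts the index by \<open>r\<close>. Together these give
  the closed form of \<open>r k(i r + j)\<close>. Substituting it into
  \<open>\<Delta> \<xi>(m, n) = k(m) + k(n) + p - k(m + n + r)\<close>, all terms in \<open>k(0)\<close> and \<open>p\<close> cancel,
  leaving \<open>r \<xi>(m, n)\<close> as a combination of the \<open>\<tau>\<^sub>j\<close> and of sums \<open>\<Sum>\<^sub>s \<xi>(0, s r + j)\<close>.\<close>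

locale xi_recurrence =
  fixes r :: nat and p \<Delta> :: int
    and \<xi> :: "nat \<Rightarrow> nat \<Rightarrow> nat" and k :: "nat \<Rightarrow> nat"
  assumes r_pos: "r > 0" and \<Delta>_nonzero: "\<Delta> \<noteq> 0"
    and rec: "\<And>s t. int (k (s + t + r)) = int (k s) + int (k t) + p - \<Delta> * int (\<xi> s t)"
begin

lemma xi_sym: "\<xi> s t = \<xi> t s"
proof -
  have "\<Delta> * int (\<xi> s t) = \<Delta> * int (\<xi> t s)"
    using rec[of s t] rec[of t s] by (simp add: add.commute)
  then show ?thesis
    using \<Delta>_nonzero by simp
qed

lemma xdiff_0: "xdiff \<xi> 0 = 0"
  using xi_sym[of 1 0] by (simp add: xdiff_def)

lemma k_Suc: "int (k (Suc t)) = int (k t) + (int (k 1) - int (k 0)) + \<Delta> * xdiff \<xi> t"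
  using rec[of 1 t] rec[of "Suc t" 0] xi_sym[of "Suc t" 0]
  by (simp add: xdiff_def algebra_simps)

lemma k_eq: "int (k j) = int (k 0) + int j * (int (k 1) - int (k 0)) + \<Delta> * (\<Sum>s\<in>{1..<j}. xdiff \<xi> s)"
proof (induction j)
  case (Suc j)
  have "(\<Sum>s\<in>{1..<Suc j}. xdiff \<xi> s) = (\<Sum>s\<in>{1..<j}. xdiff \<xi> s) + xdiff \<xi> j"
    using xdiff_0 by (cases j) auto
  then show ?case
    using Suc k_Suc[of j] by (simp add: algebra_simps)
qed simp

lemma k_add_mult_r:
  "int (k (i * r + j)) = int (k j) + int i * (int (k 0) + p) - \<Delta> * (\<Sum>s<i. int (\<xi> 0 (s * r + j)))"
proof (induction i)
  case (Suc i)
  have "Suc i * r + j = (i * r + j) + 0 + r" by simp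
  then show ?case
    using Suc rec[of "i * r + j" 0] xi_sym[of "i * r + j" 0] by (simp add: algebra_simps)
qed simp

lemma r_mult_k_diff:
  "int r * (int (k 1) - int (k 0)) = int (k 0) + p - \<Delta> * (int (\<xi> 0 0) + (\<Sum>s\<in>{1..<r}. xdiff \<xi> s))"
  using k_eq[of r] rec[of 0 0] by (simp add: algebra_simps)

lemma r_mult_k: "int r * int (k j) = int (r + j) * int (k 0) + int j * p - \<Delta> * tau \<xi> r j"
proof -
  have "int r * int (k j) = int r * int (k 0) + int j * (int r * (int (k 1) - int (k 0)))
      + int r * \<Delta> * (\<Sum>s\<in>{1..<j}. xdiff \<xi> s)"
    unfolding k_eq[of j] by (simp add: algebra_simps)
  also have "\<dots> = int (r + j) * int (k 0) + int j * p - \<Delta> * tau \<xi> r j"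
    unfolding r_mult_k_diff tau_def by (simp add: algebra_simps)
  finally show ?thesis .
qed

lemma r_mult_k_add_mult_r:
  "int r * int (k (i * r + j)) =
     int ((i + 1) * r + j) * int (k 0) + int (i * r + j) * p
     - \<Delta> * (tau \<xi> r j + int r * (\<Sum>s<i. int (\<xi> 0 (s * r + j))))"
proof -
  have "int r * int (k (i * r + j)) = int r * int (k j) + int r * int i * (int (k 0) + p)
      - \<Delta> * (int r * (\<Sum>s<i. int (\<xi> 0 (s * r + j))))"
    unfolding k_add_mult_r by (simp add: algebra_simps)
  also have "\<dots> = int ((i + 1) * r + j) * int (k 0) + int (i * r + j) * p
     - \<Delta> * (tau \<xi> r j + int r * (\<Sum>s<i. int (\<xi> 0 (s * r + j))))"
    unfolding r_mult_k by (simp add: algebra_simps)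
  finally show ?thesis .
qed

lemma r_mult_xi:
  assumes "a * r + b + (c * r + d) + r = q * r + e"
  shows "int r * int (\<xi> (a * r + b) (c * r + d)) =
    tau \<xi> r e - tau \<xi> r b - tau \<xi> r d
    + int r * ((\<Sum>s<q. int (\<xi> 0 (s * r + e))) - (\<Sum>s<a. int (\<xi> 0 (s * r + b)))
               - (\<Sum>s<c. int (\<xi> 0 (s * r + d))))"
proof -
  have \<Delta>_xi: "\<Delta> * int (\<xi> (a * r + b) (c * r + d)) =
      int (k (a * r + b)) + int (k (c * r + d)) + p - int (k (q * r + e))"
    using rec[of "a * r + b" "c * r + d", unfolded assms] by simp
  have "\<Delta> * (int r * int (\<xi> (a * r + b) (c * r + d))) =
      int r * int (k (a * r + b)) + int r * int (k (c * r + d)) + int r * p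
      - int r * int (k (q * r + e))"
    using arg_cong[OF \<Delta>_xi, of "(*) (int r)"] by (simp add: algebra_simps)
  also have "\<dots> = \<Delta> * (tau \<xi> r e - tau \<xi> r b - tau \<xi> r d
    + int r * ((\<Sum>s<q. int (\<xi> 0 (s * r + e))) - (\<Sum>s<a. int (\<xi> 0 (s * r + b)))
               - (\<Sum>s<c. int (\<xi> 0 (s * r + d)))))"
  proof -
    have index_sum: "int (q * r + e) = int (a * r + b) + int (c * r + d) + int r"
      "int ((q + 1) * r + e) = int (a * r + b) + int (c * r + d) + 2 * int r"
      using arg_cong[OF assms, of int] by (simp_all add: algebra_simps)
    show ?thesis
      unfolding r_mult_k_add_mult_r index_sum by (simp add: algebra_simps)
  qed
  finally show ?thesis
    using \<Delta>_nonzero by simp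
qed

lemma xi_no_carry:
  "int (\<xi> (a * r + b) (c * r + d)) =
    (\<Sum>s\<in>{1..<b}. xdiff \<xi> s) + (\<Sum>s\<in>{1..<d}. xdiff \<xi> s)
    - (\<Sum>s\<in>{1..<b + d}. xdiff \<xi> s)
    + (\<Sum>s\<in>{0..a + c}. int (\<xi> 0 (s * r + b + d)))
    - (\<Sum>s<a. int (\<xi> 0 (s * r + b)))
    - (\<Sum>s<c. int (\<xi> 0 (s * r + d)))"
proof -
  have "a * r + b + (c * r + d) + r = (a + c + 1) * r + (b + d)"
    by (simp add: algebra_simps)
  from r_mult_xi[OF this]
  have "int r * int (\<xi> (a * r + b) (c * r + d)) = int r *
    ((\<Sum>s\<in>{1..<b}. xdiff \<xi> s) + (\<Sum>s\<in>{1..<d}. xdiff \<xi> s)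
    - (\<Sum>s\<in>{1..<b + d}. xdiff \<xi> s)
    + (\<Sum>s<a + c + 1. int (\<xi> 0 (s * r + b + d)))
    - (\<Sum>s<a. int (\<xi> 0 (s * r + b)))
    - (\<Sum>s<c. int (\<xi> 0 (s * r + d))))"
    unfolding tau_def by (simp add: algebra_simps)
  moreover have "{0..a + c} = {..<a + c + 1}" by auto
  ultimately show ?thesis
    using r_pos by simp
qed

lemma xi_carry:
  assumes "b + d \<ge> r"
  shows "int (\<xi> (a * r + b) (c * r + d)) =
    (\<Sum>s\<in>{1..<b}. xdiff \<xi> s) + (\<Sum>s\<in>{1..<d}. xdiff \<xi> s)
    - (\<Sum>s\<in>{1..<b + d - r}. xdiff \<xi> s)
    + (\<Sum>s\<in>{0..a + c + 1}. int (\<xi> 0 (s * r + b + d - r)))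
    - (\<Sum>s<a. int (\<xi> 0 (s * r + b)))
    - (\<Sum>s<c. int (\<xi> 0 (s * r + d)))
    - int (\<xi> 0 0) - (\<Sum>s\<in>{1..<r}. xdiff \<xi> s)"
proof -
  have "a * r + b + (c * r + d) + r = (a + c + 2) * r + (b + d - r)"
    using assms by (simp add: algebra_simps)
  from r_mult_xi[OF this] assms
  have "int r * int (\<xi> (a * r + b) (c * r + d)) = int r *
    ((\<Sum>s\<in>{1..<b}. xdiff \<xi> s) + (\<Sum>s\<in>{1..<d}. xdiff \<xi> s)
    - (\<Sum>s\<in>{1..<b + d - r}. xdiff \<xi> s)
    + (\<Sum>s<a + c + 2. int (\<xi> 0 (s * r + (b + d - r))))
    - (\<Sum>s<a. int (\<xi> 0 (s * r + b)))
    - (\<Sum>s<c. int (\<xi> 0 (s * r + d)))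
    - int (\<xi> 0 0) - (\<Sum>s\<in>{1..<r}. xdiff \<xi> s))"
    unfolding tau_def by (simp add: algebra_simps)
  moreover have "{0..a + c + 1} = {..<a + c + 2}" by auto
  moreover have "s * r + b + d - r = s * r + (b + d - r)" for s
    using assms by simp
  ultimately show ?thesis
    using r_pos by simp
qed

end

theorem lemma2p7:
  fixes r :: nat and p \<Delta> :: int
    and \<xi> :: "nat \<Rightarrow> nat \<Rightarrow> nat" and k :: "nat \<Rightarrow> nat"
  assumes "r > 0" and "p > 0" and "\<Delta> > 0"
    and rec: "\<And>s t. int (k (s + t + r)) = int (k s) + int (k t) + p - \<Delta> * int (\<xi> s t)"
  shows "(\<forall>s. \<xi> s 0 = \<xi> 0 s)
    \<and> (\<forall>i j. j < r \<longrightarrow>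
          int r * int (k (i * r + j)) =
            int ((i + 1) * r + j) * int (k 0) + int (i * r + j) * p
            - \<Delta> * (tau \<xi> r j + int r * (\<Sum>s<i. int (\<xi> 0 (s * r + j)))))
    \<and> (\<forall>a b c d. b < r \<longrightarrow> d < r \<longrightarrow> b + d < r \<longrightarrow>
          int (\<xi> (a * r + b) (c * r + d)) =
            (\<Sum>s\<in>{1..<b}. xdiff \<xi> s) + (\<Sum>s\<in>{1..<d}. xdiff \<xi> s)
            - (\<Sum>s\<in>{1..<b + d}. xdiff \<xi> s)
            + (\<Sum>s\<in>{0..a + c}. int (\<xi> 0 (s * r + b + d)))
            - (\<Sum>s<a. int (\<xi> 0 (s * r + b)))
            - (\<Sum>s<c. int (\<xi> 0 (s * r + d))))
    \<and> (\<forall>a b c d. b < r \<longrightarrow> d < r \<longrightarrow> b + d \<ge> r \<longrightarrow>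
          int (\<xi> (a * r + b) (c * r + d)) =
            (\<Sum>s\<in>{1..<b}. xdiff \<xi> s) + (\<Sum>s\<in>{1..<d}. xdiff \<xi> s)
            - (\<Sum>s\<in>{1..<b + d - r}. xdiff \<xi> s)
            + (\<Sum>s\<in>{0..a + c + 1}. int (\<xi> 0 (s * r + b + d - r)))
            - (\<Sum>s<a. int (\<xi> 0 (s * r + b)))
            - (\<Sum>s<c. int (\<xi> 0 (s * r + d)))
            - int (\<xi> 0 0) - (\<Sum>s\<in>{1..<r}. xdiff \<xi> s))"
proof -
  interpret xi_recurrence r p \<Delta> \<xi> k
    using assms(1,3) rec by unfold_locales simp_all
  show ?thesis
    using xi_sym r_mult_k_add_mult_r xi_no_carry xi_carry by blast
qed

end
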